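(* Let $\succeq$ be a complete and transitive preference relation on $\mathcal{L}$ that is continuous with respect to convergence in probability, satisfies state-wise monotonicity, and is regret based. Then for any $X,Y\in\mathcal{L}$ with $F_X=F_Y$ (i.e., $X$ and $Y$ have the same cumulative distribution function), we have $X\sim Y$ (i.e., $X\succeq Y$ and $Y\succeq X$).
   Context: Fix a bounded interval of outcomes $[\underline x,\bar x]\subset\mathbb{R}$. Let $(S,\Sigma,\mathrm{P})$ be the probability space with $S=[0,1]$, $\Sigma$ the Borel $\sigma$-algebra on $[0,1]$, and $\mathrm{P}$ Lebesgue measure. $\mathcal{L}$ is the set of measurable random variables $X:S\to[\underline x,\bar x]$ taking only finitely many values; such $X$ is written $X=(x_1,S_1;\ldots;x_n,S_n)$, meaning $X=x_i$ on the event $S_i$, where $S_1,\ldots,S_n$ is a measurable partition of $S$. $F_X$ denotes the cdf of $X$. A preference relation $\succeq$ on $\mathcal{L}$ is a binary relation; $\succ$ and $\sim$ are its strict and indifference parts. A regret function is a continuous $\psi:[\underline x,\bar x]\times[\underline x,\bar x]\to\mathbb{R}$ with $\psi(x,x)=0$ for all $x$, $\psi(x,y)$ strictly increasing in $x$ and strictly decreasing in $y$. For $X=(x_1,S_1;\ldots;x_n,S_n)$ and $Y=(y_1,S_1;\ldots;y_n,S_n)$ written on a common partition, the regret lottery is the finite-support lottery $\Psi(X,Y)=(\psi(x_1,y_1),p_1;\ldots;\psi(x_n,y_n),p_n)$ with $p_i=\mathrm{P}(S_i)$ (i.e., the distribution of $s\mapsto\psi(X(s),Y(s))$). The relation $\succeq$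 is regret based if there exist a regret function $\psi$ and a continuous real-valued functional $V$ defined on the set of regret lotteries $\{\Psi(X,Y):X,Y\in\mathcal{L}\}$ such that for all $X,Y\in\mathcal{L}$: $X\succeq Y$ iff $V(\Psi(X,Y))\geqslant 0$. A sequence $X^k\in\mathcal{L}$ converges in probability to $X\in\mathcal{L}$ if for every $\varepsilon>0$, $\lim_{k\to\infty}\mathrm{P}(|X^k-X|\geqslant\varepsilon)=0$. $\succeq$ is continuous with respect to convergence in probability if, whenever $X^k\to X$ in probability: $X^k\succeq Y$ for all $k$ implies $X\succeq Y$, and $Y\succeq X^k$ for all $k$ implies $Y\succeq X$. $\succeq$ satisfies state-wise monotonicity if for any measurable partition $S_1,\ldots,S_n$ of $S$ and any $X=(x_1,S_1;\ldots;x_n,S_n)$, $Y=(y_1,S_1;\ldots;y_n,S_n)$ with $x_i\geqslant y_i$ for all $i$ and at least one strict inequality, $X\succ Y$. *)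

theory Defs
  imports "HOL-Probability.Probability"
begin

definition PS :: "real measure" where
  "PS = restrict_space lborel {0..1}"

text \<open>Simple random variables with values in [xl, xh] (only values on S = [0,1] matter).\<close>
definition lotteries :: "real \<Rightarrow> real \<Rightarrow> (real \<Rightarrow> real) set" where
  "lotteries xl xh = {X. X \<in> borel_measurable PS \<and> X ` {0..1} \<subseteq> {xl..xh} \<and> finite (X ` {0..1})}"

definition cdf_of :: "(real \<Rightarrow> real) \<Rightarrow> real \<Rightarrow> real" where
  "cdf_of X = cdf (distr PS borel X)"

definition strict_pref :: "((real \<Rightarrow> real) \<Rightarrow> (real \<Rightarrow> real) \<Rightarrow> bool) \<Rightarrow> (real \<Rightarrow> real) \<Rightarrow> (real \<Rightarrow> real) \<Rightarrow> bool" where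
  "strict_pref R X Y \<longleftrightarrow> R X Y \<and> \<not> R Y X"

definition complete_pref :: "real \<Rightarrow> real \<Rightarrow> ((real \<Rightarrow> real) \<Rightarrow> (real \<Rightarrow> real) \<Rightarrow> bool) \<Rightarrow> bool" where
  "complete_pref xl xh R \<longleftrightarrow> (\<forall>X\<in>lotteries xl xh. \<forall>Y\<in>lotteries xl xh. R X Y \<or> R Y X)"

definition transitive_pref :: "real \<Rightarrow> real \<Rightarrow> ((real \<Rightarrow> real) \<Rightarrow> (real \<Rightarrow> real) \<Rightarrow> bool) \<Rightarrow> bool" where
  "transitive_pref xl xh R \<longleftrightarrow> (\<forall>X\<in>lotteries xl xh. \<forall>Y\<in>lotteries xl xh. \<forall>Z\<in>lotteries xl xh.
      R X Y \<longrightarrow> R Y Z \<longrightarrow> R X Z)"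

definition conv_in_prob :: "(nat \<Rightarrow> real \<Rightarrow> real) \<Rightarrow> (real \<Rightarrow> real) \<Rightarrow> bool" where
  "conv_in_prob Xs X \<longleftrightarrow> (\<forall>\<epsilon>>0. (\<lambda>k. measure PS {s \<in> space PS. \<bar>Xs k s - X s\<bar> \<ge> \<epsilon>}) \<longlonglongrightarrow> 0)"

definition continuous_in_prob :: "real \<Rightarrow> real \<Rightarrow> ((real \<Rightarrow> real) \<Rightarrow> (real \<Rightarrow> real) \<Rightarrow> bool) \<Rightarrow> bool" where
  "continuous_in_prob xl xh R \<longleftrightarrow>
     (\<forall>Xs X Y. (\<forall>k. Xs k \<in> lotteries xl xh) \<and> X \<in> lotteries xl xh \<and> Y \<in> lotteries xl xh \<and> conv_in_prob Xs X \<longrightarrow>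
        ((\<forall>k. R (Xs k) Y) \<longrightarrow> R X Y) \<and> ((\<forall>k. R Y (Xs k)) \<longrightarrow> R Y X))"

text \<open>State-wise monotonicity: X = (x_1,S_1;...;x_n,S_n), Y = (y_1,S_1;...;y_n,S_n) on a
  measurable partition S_1..S_n of [0,1] into events of positive probability.\<close>
definition statewise_monotone :: "real \<Rightarrow> real \<Rightarrow> ((real \<Rightarrow> real) \<Rightarrow> (real \<Rightarrow> real) \<Rightarrow> bool) \<Rightarrow> bool" where
  "statewise_monotone xl xh R \<longleftrightarrow>
     (\<forall>(n::nat) (P :: nat \<Rightarrow> real set) (x :: nat \<Rightarrow> real) (y :: nat \<Rightarrow> real) X Y.
        X \<in> lotteries xl xh \<and> Y \<in> lotteries xl xh \<and>
        (\<forall>i<n. P i \<in> sets PS \<and> measure PS (P i) > 0) \<and>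
        (\<forall>i<n. \<forall>j<n. i \<noteq> j \<longrightarrow> P i \<inter> P j = {}) \<and>
        (\<Union>i<n. P i) = {0..1} \<and>
        (\<forall>i<n. \<forall>s\<in>P i. X s = x i \<and> Y s = y i) \<and>
        (\<forall>i<n. x i \<ge> y i) \<and> (\<exists>i<n. x i > y i)
        \<longrightarrow> strict_pref R X Y)"

definition regret_function :: "real \<Rightarrow> real \<Rightarrow> (real \<Rightarrow> real \<Rightarrow> real) \<Rightarrow> bool" where
  "regret_function xl xh \<psi> \<longleftrightarrow>
     continuous_on ({xl..xh} \<times> {xl..xh}) (\<lambda>(x, y). \<psi> x y) \<and>
     (\<forall>x\<in>{xl..xh}. \<psi> x x = 0) \<and>
     (\<forall>y\<in>{xl..xh}. \<forall>x1\<in>{xl..xh}. \<forall>x2\<in>{xl..xh}. x1 < x2 \<longrightarrow> \<psi> x1 y < \<psi> x2 y) \<and>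
     (\<forall>x\<in>{xl..xh}. \<forall>y1\<in>{xl..xh}. \<forall>y2\<in>{xl..xh}. y1 < y2 \<longrightarrow> \<psi> x y2 < \<psi> x y1)"

definition regret_lottery :: "(real \<Rightarrow> real \<Rightarrow> real) \<Rightarrow> (real \<Rightarrow> real) \<Rightarrow> (real \<Rightarrow> real) \<Rightarrow> real measure" where
  "regret_lottery \<psi> X Y = distr PS borel (\<lambda>s. \<psi> (X s) (Y s))"

definition regret_lotteries :: "real \<Rightarrow> real \<Rightarrow> (real \<Rightarrow> real \<Rightarrow> real) \<Rightarrow> real measure set" where
  "regret_lotteries xl xh \<psi> = {regret_lottery \<psi> X Y | X Y. X \<in> lotteries xl xh \<and> Y \<in> lotteries xl xh}"

text \<open>Continuity of a functional on a set of lotteries (topology of weak convergence,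
  which is metrizable here, so sequential continuity is used).\<close>
definition lottery_continuous :: "real measure set \<Rightarrow> (real measure \<Rightarrow> real) \<Rightarrow> bool" where
  "lottery_continuous A V \<longleftrightarrow>
     (\<forall>Ls L. (\<forall>k. Ls k \<in> A) \<and> L \<in> A \<and> weak_conv_m Ls L \<longrightarrow> (\<lambda>k. V (Ls k)) \<longlonglongrightarrow> V L)"

definition regret_based :: "real \<Rightarrow> real \<Rightarrow> ((real \<Rightarrow> real) \<Rightarrow> (real \<Rightarrow> real) \<Rightarrow> bool) \<Rightarrow> bool" where
  "regret_based xl xh R \<longleftrightarrow>
     (\<exists>\<psi> V. regret_function xl xh \<psi> \<and> lottery_continuous (regret_lotteries xl xh \<psi>) V \<and>
        (\<forall>X\<in>lotteries xl xh. \<forall>Y\<in>lotteries xl xh. R X Y \<longleftrightarrow> V (regret_lottery \<psi> X Y) \<ge> 0))"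

end

theory Submission
  imports Defs
begin

text \<open>If Z arises from X by exchanging the outcomes a and b on two disjoint events of equal
  probability, then the regret lotteries of X against Z and of Z against X coincide
  (both put mass P(E) on psi(a,b) and on psi(b,a), and the rest on psi(x,x) = 0), so by
  completeness X and Z are indifferent. Since Lebesgue measure has no atoms, two simple
  random variables with the same distribution are connected by finitely many such swaps:
  for each outcome b of Y and each outcome a of X on the event Y = b, swap the part of
  X = a inside Y = b with an equally likely part of X = b outside Y = b. Transitivity
  finishes the proof.\<close>

lemma space_PS [simp]: "space PS = {0..1}"
  by (simp add: PS_def space_restrict_space)

lemma sets_PS_iff: "A \<in> sets PS \<longleftrightarrow> A \<subseteq> {0..1} \<and> A \<in> sets borel"
  unfolding PS_def by (subst sets_restrict_space_iff) auto

lemma measure_PS: "A \<subseteq> {0..1} \<Longrightarrow> measure PS A = measure lborel A"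
  unfolding PS_def by (rule measure_restrict_space) auto

lemma prob_space_PS: "prob_space PS"
  by (rule prob_spaceI) (simp add: PS_def emeasure_restrict_space)

interpretation PS: prob_space PS
  by (rule prob_space_PS)

lemma PS_exists_subset_of_measure:
  assumes G: "G \<in> sets PS" and m: "0 \<le> m" "m \<le> measure PS G"
  obtains D where "D \<in> sets PS" "D \<subseteq> G" "measure PS D = m"
proof -
  have G_sub: "G \<subseteq> {0..1}" and G_borel: "G \<in> sets borel"
    using G by (auto simp: sets_PS_iff)
  define f where "f t = measure PS (G \<inter> {..t})" for t
  have G_Int: "G \<inter> A \<in> sets PS" if "A \<in> sets borel" for A
    using G_sub G_borel that by (auto simp: sets_PS_iff)
  have increment: "0 \<le> f t' - f t \<and> f t' - f t \<le> t' - t" if "t \<le> t'" for t t'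
  proof -
    have "G \<inter> {..t'} = (G \<inter> {..t}) \<union> (G \<inter> {t<..t'})" using that by auto
    then have "f t' = f t + measure PS (G \<inter> {t<..t'})"
      unfolding f_def by (simp add: PS.finite_measure_Union G_Int disjoint_iff)
    then have "f t' - f t = measure PS (G \<inter> {t<..t'})" by simp
    also have "\<dots> = measure lborel (G \<inter> {t<..t'})"
      using G_sub by (intro measure_PS) auto
    finally have "f t' - f t = measure lborel (G \<inter> {t<..t'})" .
    moreover have "measure lborel (G \<inter> {t<..t'}) \<le> measure lborel {t..t'}"
      using G_borel that by (intro measure_mono_fmeasurable) (auto simp: fmeasurable_def)
    ultimately show ?thesis using that by simp
  qed
  have "1-lipschitz_on {0..1} f"
  proof (rule lipschitz_onI)
    show "dist (f t) (f t') \<le> 1 * dist t t'" for t t'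
      using increment[of t t'] increment[of t' t] by (cases "t \<le> t'") (auto simp: dist_real_def)
  qed simp
  then have "continuous_on {0..1} f"
    by (rule lipschitz_on_continuous_on)
  moreover have "f 0 = 0"
  proof -
    have "f 0 \<le> measure PS {0}"
      unfolding f_def using G_sub by (intro PS.finite_measure_mono) (auto simp: sets_PS_iff)
    also have "measure PS {0} = 0"
      by (simp add: measure_PS)
    finally show ?thesis by (simp add: f_def measure_le_0_iff)
  qed
  moreover have "f 1 = measure PS G"
    unfolding f_def using G_sub by (metis Int_absorb2 atLeastAtMost_iff atMost_iff subset_iff)
  ultimately obtain t where "f t = m"
    using IVT'[of f 0 m 1] m by auto
  then show ?thesis
    using that[of "G \<inter> {..t}"] G_Int f_def by auto
qed

lemma distr_eq_if_swapped_constants: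
  fixes f g :: "'a \<Rightarrow> 'b"
  assumes f: "f \<in> measurable M N" and g: "g \<in> measurable M N"
    and E: "E \<in> sets M" and D: "D \<in> sets M" and disjoint: "E \<inter> D = {}"
    and equal_mass: "emeasure M E = emeasure M D"
    and on_E: "\<And>s. s \<in> E \<Longrightarrow> f s = c \<and> g s = d"
    and on_D: "\<And>s. s \<in> D \<Longrightarrow> f s = d \<and> g s = c"
    and elsewhere: "\<And>s. s \<in> space M - E - D \<Longrightarrow> f s = g s"
  shows "distr M N f = distr M N g"
proof (rule measure_eqI)
  fix A assume "A \<in> sets (distr M N f)"
  then have A: "A \<in> sets N" by simp
  define P where "P = f -` A \<inter> space M - E - D"
  define part where "part u F = (if u \<in> A then F else {})" for u and F :: "'a set"
  have P: "P \<in> sets M"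
    unfolding P_def using measurable_sets[OF f A] E D by blast
  have parts: "part u E \<in> sets M" "part u D \<in> sets M" for u
    unfolding part_def using E D by auto
  have same_part_mass: "emeasure M (part u E) = emeasure M (part u D)" for u
    unfolding part_def using equal_mass by simp
  have E_space: "E \<subseteq> space M" and D_space: "D \<subseteq> space M"
    using E D by (auto dest: sets.sets_into_space)
  have additive: "emeasure M (P \<union> E' \<union> D') = emeasure M P + emeasure M E' + emeasure M D'"
    if "E' \<in> sets M" "D' \<in> sets M" "E' \<subseteq> E" "D' \<subseteq> D" for E' D'
  proof -
    have "emeasure M (P \<union> E' \<union> D') = emeasure M (P \<union> E') + emeasure M D'"
      using that P disjoint by (intro plus_emeasure[symmetric]) (auto simp: P_def)
    also have "emeasure M (P \<union> E') = emeasure M P + emeasure M E'"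
      using that P by (intro plus_emeasure[symmetric]) (auto simp: P_def)
    finally show ?thesis .
  qed
  have "f -` A \<inter> space M = P \<union> part c E \<union> part d D"
    unfolding P_def part_def using on_E on_D E_space D_space disjoint by auto
  then have "emeasure (distr M N f) A = emeasure M P + emeasure M (part c E) + emeasure M (part d D)"
    using parts by (simp add: emeasure_distr[OF f A] additive part_def)
  also have "\<dots> = emeasure M P + emeasure M (part d E) + emeasure M (part c D)"
    using same_part_mass by (simp add: add.assoc add.commute)
  also have "g -` A \<inter> space M - E - D = P"
    unfolding P_def using elsewhere by auto
  then have "g -` A \<inter> space M = P \<union> part d E \<union> part c D"
    unfolding part_def using on_E on_D E_space D_space disjoint by auto
  then have "emeasure M P + emeasure M (part d E) + emeasure M (part c D) = emeasure (distr M N g) A"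
    using parts by (simp add: emeasure_distr[OF g A] additive part_def)
  finally show "emeasure (distr M N f) A = emeasure (distr M N g) A" .
qed simp

lemma lotteries_measurable: "X \<in> lotteries xl xh \<Longrightarrow> X \<in> borel_measurable PS"
  by (simp add: lotteries_def)

lemma lotteries_range: "X \<in> lotteries xl xh \<Longrightarrow> s \<in> {0..1} \<Longrightarrow> X s \<in> {xl..xh}"
  by (auto simp: lotteries_def image_subset_iff)

lemma lotteries_finite_range: "X \<in> lotteries xl xh \<Longrightarrow> finite (X ` {0..1})"
  by (simp add: lotteries_def)

lemma lotteries_simple_function: "X \<in> lotteries xl xh \<Longrightarrow> simple_function PS X"
  by (simp add: lotteries_def simple_function_borel_measurable)

lemma lotteries_level_set: "X \<in> lotteries xl xh \<Longrightarrow> {s \<in> space PS. X s = c} \<in> sets PS"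
  using measurable_sets[OF lotteries_measurable, of X xl xh "{c}"]
  by (simp add: vimage_def Int_def conj_commute)

lemma distr_eq_if_cdf_of_eq:
  assumes "X \<in> lotteries xl xh" "Y \<in> lotteries xl xh" "cdf_of X = cdf_of Y"
  shows "distr PS borel X = distr PS borel Y"
  using assms by (intro cdf_unique) (auto simp: cdf_of_def lotteries_measurable)

definition swapped :: "(real \<Rightarrow> real) \<Rightarrow> (real \<Rightarrow> real) \<Rightarrow> bool" where
  "swapped X Z \<longleftrightarrow> (\<exists>E D a b. E \<in> sets PS \<and> D \<in> sets PS \<and> E \<inter> D = {} \<and>
      measure PS E = measure PS D \<and> (\<forall>s\<in>E. X s = a \<and> Z s = b) \<and> (\<forall>s\<in>D. X s = b \<and> Z s = a) \<and>
      (\<forall>s\<in>space PS - E - D. Z s = X s))"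

lemma swapped_if_eq_on_space: "(\<And>s. s \<in> space PS \<Longrightarrow> Z s = X s) \<Longrightarrow> swapped X Z"
  unfolding swapped_def by (rule exI[of _ "{}"], rule exI[of _ "{}"]) auto

lemma swappedE:
  assumes "swapped X Z"
  obtains E D a b where "E \<in> sets PS" "D \<in> sets PS" "E \<inter> D = {}"
    "emeasure PS E = emeasure PS D"
    "\<And>s. s \<in> E \<Longrightarrow> X s = a \<and> Z s = b" "\<And>s. s \<in> D \<Longrightarrow> X s = b \<and> Z s = a"
    "\<And>s. s \<in> space PS - E - D \<Longrightarrow> Z s = X s"
proof -
  from assms obtain E D a b where "E \<in> sets PS" "D \<in> sets PS" "E \<inter> D = {}"
    "measure PS E = measure PS D" "\<forall>s\<in>E. X s = a \<and> Z s = b" "\<forall>s\<in>D. X s = b \<and> Z s = a"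
    "\<forall>s\<in>space PS - E - D. Z s = X s"
    unfolding swapped_def by blast
  then show thesis
    by (intro that[of E D a b]) (auto simp: PS.emeasure_eq_measure)
qed

lemma distr_swapped:
  assumes "swapped X Z" "X \<in> borel_measurable PS" "Z \<in> borel_measurable PS"
  shows "distr PS borel X = distr PS borel Z"
proof -
  obtain E D a b where "E \<in> sets PS" "D \<in> sets PS" "E \<inter> D = {}"
    "emeasure PS E = emeasure PS D"
    "\<And>s. s \<in> E \<Longrightarrow> X s = a \<and> Z s = b" "\<And>s. s \<in> D \<Longrightarrow> X s = b \<and> Z s = a"
    "\<And>s. s \<in> space PS - E - D \<Longrightarrow> Z s = X s"
    using assms(1) by (elim swappedE) blast
  then show ?thesis
    using assms(2,3)
    by (intro distr_eq_if_swapped_constants[where E = E and D = D and c = a and d = b]) auto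
qed

lemma regret_lottery_swapped:
  assumes "swapped X Z" and X: "X \<in> lotteries xl xh" and Z: "Z \<in> lotteries xl xh"
    and diag: "\<And>x. x \<in> {xl..xh} \<Longrightarrow> \<psi> x x = 0"
  shows "regret_lottery \<psi> X Z = regret_lottery \<psi> Z X"
proof -
  obtain E D a b where swap: "E \<in> sets PS" "D \<in> sets PS" "E \<inter> D = {}"
    "emeasure PS E = emeasure PS D"
    "\<And>s. s \<in> E \<Longrightarrow> X s = a \<and> Z s = b" "\<And>s. s \<in> D \<Longrightarrow> X s = b \<and> Z s = a"
    and elsewhere: "\<And>s. s \<in> space PS - E - D \<Longrightarrow> Z s = X s"
    using assms(1) by (elim swappedE) blast
  have measurable: "(\<lambda>s. \<psi> (X s) (Z s)) \<in> borel_measurable PS"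
    "(\<lambda>s. \<psi> (Z s) (X s)) \<in> borel_measurable PS"
    by (rule borel_measurable_simple_function, rule simple_function_compose2,
        (rule lotteries_simple_function, fact)+)+
  have "\<psi> (X s) (Z s) = \<psi> (Z s) (X s)" if "s \<in> space PS - E - D" for s
    using elsewhere[OF that] diag[OF lotteries_range[OF X]] that by auto
  with swap measurable show ?thesis
    unfolding regret_lottery_def
    by (intro distr_eq_if_swapped_constants[where E = E and D = D and c = "\<psi> a b" and d = "\<psi> b a"])
      auto
qed

lemma exists_swap_into_level_set:
  assumes X: "X \<in> lotteries xl xh" and Y: "Y \<in> lotteries xl xh"
    and same_distr: "distr PS borel X = distr PS borel Y"
    and s0: "s0 \<in> {0..1}" "X s0 = a" "Y s0 = b" and "a \<noteq> b"
  obtains X' where "X' \<in> lotteries xl xh" "swapped X X'"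
    "\<And>s. s \<in> {0..1} \<Longrightarrow> X s = Y s \<Longrightarrow> X' s = X s"
    "\<And>s. s \<in> {0..1} \<Longrightarrow> Y s = b \<Longrightarrow> X' s \<noteq> b \<Longrightarrow> X' s = X s \<and> X s \<noteq> a"
proof -
  define level where "level Z c = {s \<in> space PS. Z s = c}" for Z :: "real \<Rightarrow> real" and c
  have level_sets: "level X c \<in> sets PS" "level Y c \<in> sets PS" for c
    unfolding level_def by (rule lotteries_level_set, fact)+
  have same_level_measure: "measure PS (level X c) = measure PS (level Y c)" for c
  proof -
    have "level Z c = Z -` {c} \<inter> space PS" for Z
      unfolding level_def by auto
    then show ?thesis
      using measure_distr[OF lotteries_measurable[OF X], of "{c}"]
        measure_distr[OF lotteries_measurable[OF Y], of "{c}"] same_distr by simp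
  qed
  define E where "E = level X a \<inter> level Y b"
  define G where "G = level X b - level Y b"
  have E: "E \<in> sets PS" and G: "G \<in> sets PS"
    unfolding E_def G_def using level_sets by auto
  txt \<open>Since X = b and Y = b are equally likely, Y = b \<and> X \<noteq> b and X = b \<and> Y \<noteq> b are too.\<close>
  have "measure PS E \<le> measure PS (level Y b - level X b)"
    unfolding E_def using \<open>a \<noteq> b\<close> level_sets
    by (intro PS.finite_measure_mono) (auto simp: level_def)
  also have "\<dots> = measure PS G"
    unfolding G_def using level_sets same_level_measure[of b]
    by (simp add: PS.finite_measure_Diff' Int_commute)
  finally obtain D where D: "D \<in> sets PS" "D \<subseteq> G" "measure PS D = measure PS E"
    using PS_exists_subset_of_measure[OF G] by (metis measure_nonneg)
  have "E \<inter> D = {}"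
    using D(2) unfolding E_def G_def by auto
  define X' where "X' s = (if s \<in> E then b else if s \<in> D then a else X s)" for s
  have "a \<in> {xl..xh}" "b \<in> {xl..xh}"
    using lotteries_range[OF X s0(1)] lotteries_range[OF Y s0(1)] s0 by auto
  then have "X' s \<in> {xl..xh}" if "s \<in> {0..1}" for s
    unfolding X'_def using lotteries_range[OF X that] by auto
  moreover have "X' \<in> borel_measurable PS"
    unfolding X'_def using E D lotteries_measurable[OF X]
    by (intro measurable_If_set measurable_const) (auto simp: sets_PS_iff Int_absorb2)
  moreover have "finite (X' ` {0..1})"
  proof (rule finite_subset)
    show "X' ` {0..1} \<subseteq> insert a (insert b (X ` {0..1}))"
      unfolding X'_def by auto
  qed (simp add: lotteries_finite_range[OF X])
  ultimately have "X' \<in> lotteries xl xh"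
    unfolding lotteries_def by blast
  moreover have "swapped X X'"
    unfolding swapped_def
  proof (intro exI conjI)
    show "\<forall>s\<in>E. X s = a \<and> X' s = b" "\<forall>s\<in>D. X s = b \<and> X' s = a"
      using D(2) \<open>E \<inter> D = {}\<close> by (auto simp: X'_def E_def G_def level_def)
  qed (use E D \<open>E \<inter> D = {}\<close> in \<open>auto simp: X'_def\<close>)
  moreover have "X' s = X s" if "X s = Y s" for s
    using that D(2) by (auto simp: X'_def E_def G_def level_def)
  moreover have "X' s = X s \<and> X s \<noteq> a" if "s \<in> {0..1}" "Y s = b" "X' s \<noteq> b" for s
    using that D(2) by (auto simp: X'_def E_def G_def level_def)
  ultimately show ?thesis
    using that by blast
qed

definition indifferent :: "('a \<Rightarrow> 'a \<Rightarrow> bool) \<Rightarrow> 'a \<Rightarrow> 'a \<Rightarrow> bool" where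
  "indifferent R X Y \<longleftrightarrow> R X Y \<and> R Y X"

locale regret_representation =
  fixes xl xh :: real
    and R :: "(real \<Rightarrow> real) \<Rightarrow> (real \<Rightarrow> real) \<Rightarrow> bool"
    and \<psi> :: "real \<Rightarrow> real \<Rightarrow> real"
    and V :: "real measure \<Rightarrow> real"
  assumes complete: "complete_pref xl xh R"
    and transitive: "transitive_pref xl xh R"
    and regret_diag: "\<And>x. x \<in> {xl..xh} \<Longrightarrow> \<psi> x x = 0"
    and represents: "\<And>X Y. X \<in> lotteries xl xh \<Longrightarrow> Y \<in> lotteries xl xh \<Longrightarrow>
      R X Y \<longleftrightarrow> 0 \<le> V (regret_lottery \<psi> X Y)"
begin

lemma indifferent_refl: "X \<in> lotteries xl xh \<Longrightarrow> indifferent R X X"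
  using complete unfolding complete_pref_def indifferent_def by blast

lemma indifferent_trans:
  "X \<in> lotteries xl xh \<Longrightarrow> Y \<in> lotteries xl xh \<Longrightarrow> Z \<in> lotteries xl xh \<Longrightarrow>
    indifferent R X Y \<Longrightarrow> indifferent R Y Z \<Longrightarrow> indifferent R X Z"
  using transitive unfolding transitive_pref_def indifferent_def by blast

lemma indifferent_if_swapped:
  assumes "X \<in> lotteries xl xh" "Z \<in> lotteries xl xh" "swapped X Z"
  shows "indifferent R X Z"
proof -
  have "regret_lottery \<psi> X Z = regret_lottery \<psi> Z X"
    using assms(3,1,2) regret_diag by (rule regret_lottery_swapped)
  then have "R X Z \<longleftrightarrow> R Z X"
    using assms(1,2) by (simp add: represents)
  moreover have "R X Z \<or> R Z X"
    using complete assms(1,2) unfolding complete_pref_def by blast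
  ultimately show ?thesis
    unfolding indifferent_def by blast
qed

lemma exists_indifferent_constant_on_level_set:
  assumes X: "X \<in> lotteries xl xh" and Y: "Y \<in> lotteries xl xh"
    and same_distr: "distr PS borel X = distr PS borel Y"
  shows "\<exists>X'. X' \<in> lotteries xl xh \<and> distr PS borel X' = distr PS borel Y \<and> indifferent R X X' \<and>
    (\<forall>s\<in>{0..1}. X s = Y s \<longrightarrow> X' s = X s) \<and> (\<forall>s\<in>{0..1}. Y s = b \<longrightarrow> X' s = b)"
proof -
  txt \<open>F bounds the outcomes of X on Y = b that still differ from b; each swap removes one.\<close>
  have "\<exists>X'. X' \<in> lotteries xl xh \<and> distr PS borel X' = distr PS borel Y \<and> indifferent R X X' \<and>
      (\<forall>s\<in>{0..1}. X s = Y s \<longrightarrow> X' s = X s) \<and> (\<forall>s\<in>{0..1}. Y s = b \<longrightarrow> X' s = b)"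
    if "finite F" "X \<in> lotteries xl xh" "distr PS borel X = distr PS borel Y"
      "X ` {s \<in> {0..1}. Y s = b \<and> X s \<noteq> b} \<subseteq> F" for F X
    using that
  proof (induction F arbitrary: X rule: finite_induct)
    case empty
    then have "\<forall>s\<in>{0..1}. Y s = b \<longrightarrow> X s = b"
      by blast
    with empty.prems(1,2) indifferent_refl[OF empty.prems(1)] show ?case
      by blast
  next
    case (insert a F X)
    show ?case
    proof (cases "a \<in> X ` {s \<in> {0..1}. Y s = b \<and> X s \<noteq> b}")
      case False
      with insert.prems(3) have "X ` {s \<in> {0..1}. Y s = b \<and> X s \<noteq> b} \<subseteq> F"
        by blast
      then show ?thesis
        by (rule insert.IH[OF insert.prems(1,2)])
    next
      case True
      then obtain s0 where s0: "s0 \<in> {0..1}" "X s0 = a" "Y s0 = b" "a \<noteq> b"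
        by blast
      obtain X1 where X1: "X1 \<in> lotteries xl xh" "swapped X X1"
        and X1_keeps: "\<And>s. s \<in> {0..1} \<Longrightarrow> X s = Y s \<Longrightarrow> X1 s = X s"
        and X1_level: "\<And>s. s \<in> {0..1} \<Longrightarrow> Y s = b \<Longrightarrow> X1 s \<noteq> b \<Longrightarrow> X1 s = X s \<and> X s \<noteq> a"
        using exists_swap_into_level_set[OF insert.prems(1) Y insert.prems(2) s0] by blast
      have "distr PS borel X1 = distr PS borel Y"
        using distr_swapped[OF X1(2)] insert.prems(1,2) X1(1) by (simp add: lotteries_measurable)
      moreover have "X1 ` {s \<in> {0..1}. Y s = b \<and> X1 s \<noteq> b} \<subseteq> F"
      proof
        fix v assume "v \<in> X1 ` {s \<in> {0..1}. Y s = b \<and> X1 s \<noteq> b}"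
        then obtain s where s: "s \<in> {0..1}" "Y s = b" "X1 s \<noteq> b" "v = X1 s"
          by blast
        have "v = X s" "X s \<noteq> b" "v \<noteq> a"
          using X1_level[OF s(1-3)] s(3,4) by auto
        moreover have "X s \<in> insert a F"
          using insert.prems(3) s(1,2) \<open>X s \<noteq> b\<close> by blast
        ultimately show "v \<in> F"
          by simp
      qed
      ultimately obtain X2 where X2: "X2 \<in> lotteries xl xh" "distr PS borel X2 = distr PS borel Y"
        "indifferent R X1 X2" "\<forall>s\<in>{0..1}. X1 s = Y s \<longrightarrow> X2 s = X1 s"
        "\<forall>s\<in>{0..1}. Y s = b \<longrightarrow> X2 s = b"
        using insert.IH[OF X1(1)] by blast
      have "indifferent R X X2"
        using indifferent_trans[OF insert.prems(1) X1(1) X2(1)]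
          indifferent_if_swapped[OF insert.prems(1) X1(1,2)] X2(3) .
      moreover have "\<forall>s\<in>{0..1}. X s = Y s \<longrightarrow> X2 s = X s"
        using X1_keeps X2(4) by simp
      ultimately show ?thesis
        using X2(1,2,5) by blast
    qed
  qed
  moreover have "X ` {s \<in> {0..1}. Y s = b \<and> X s \<noteq> b} \<subseteq> X ` {0..1}"
    by blast
  ultimately show ?thesis
    using lotteries_finite_range[OF X] X same_distr by blast
qed

lemma indifferent_if_same_distr:
  assumes X: "X \<in> lotteries xl xh" and Y: "Y \<in> lotteries xl xh"
    and same_distr: "distr PS borel X = distr PS borel Y"
  shows "indifferent R X Y"
proof -
  have "indifferent R X Y"
    if "finite F" "X \<in> lotteries xl xh" "distr PS borel X = distr PS borel Y"
      "Y ` {s \<in> {0..1}. X s \<noteq> Y s} \<subseteq> F" for F X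
    using that
  proof (induction F arbitrary: X rule: finite_induct)
    case empty
    then have "Y s = X s" if "s \<in> space PS" for s
      using that by auto
    then have "swapped X Y"
      by (rule swapped_if_eq_on_space)
    then show ?case
      by (rule indifferent_if_swapped[OF empty.prems(1) Y])
  next
    case (insert b F X)
    obtain X1 where X1: "X1 \<in> lotteries xl xh" "distr PS borel X1 = distr PS borel Y"
      "indifferent R X X1" "\<forall>s\<in>{0..1}. X s = Y s \<longrightarrow> X1 s = X s"
      "\<forall>s\<in>{0..1}. Y s = b \<longrightarrow> X1 s = b"
      using exists_indifferent_constant_on_level_set[OF insert.prems(1) Y insert.prems(2)] by blast
    have "Y ` {s \<in> {0..1}. X1 s \<noteq> Y s} \<subseteq> F"
    proof
      fix v assume "v \<in> Y ` {s \<in> {0..1}. X1 s \<noteq> Y s}"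
      then obtain s where s: "s \<in> {0..1}" "X1 s \<noteq> Y s" "v = Y s"
        by blast
      have "X s \<noteq> Y s" "Y s \<noteq> b"
        using X1(4,5) s(1,2) by auto
      moreover have "Y s \<in> insert b F"
        using insert.prems(3) s(1) \<open>X s \<noteq> Y s\<close> by blast
      ultimately show "v \<in> F"
        using s(3) by simp
    qed
    then have "indifferent R X1 Y"
      by (rule insert.IH[OF X1(1,2)])
    with X1(3) show ?case
      by (rule indifferent_trans[OF insert.prems(1) X1(1) Y])
  qed
  moreover have "Y ` {s \<in> {0..1}. X s \<noteq> Y s} \<subseteq> Y ` {0..1}"
    by blast
  ultimately show ?thesis
    using lotteries_finite_range[OF Y] X same_distr by blast
qed

end

theorem proposition1:
  fixes xl xh :: real
    and R :: "(real \<Rightarrow> real) \<Rightarrow> (real \<Rightarrow> real) \<Rightarrow> bool"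
  assumes "complete_pref xl xh R"
    and "transitive_pref xl xh R"
    and "continuous_in_prob xl xh R"
    and "statewise_monotone xl xh R"
    and "regret_based xl xh R"
    and "X \<in> lotteries xl xh" and "Y \<in> lotteries xl xh"
    and "cdf_of X = cdf_of Y"
  shows "R X Y \<and> R Y X"
proof -
  obtain \<psi> V where \<psi>: "regret_function xl xh \<psi>"
    and represents: "\<forall>X\<in>lotteries xl xh. \<forall>Y\<in>lotteries xl xh.
      R X Y \<longleftrightarrow> (V :: real measure \<Rightarrow> real) (regret_lottery \<psi> X Y) \<ge> 0"
    using assms(5) unfolding regret_based_def by blast
  interpret regret_representation xl xh R \<psi> V
  proof
    show "\<psi> x x = 0" if "x \<in> {xl..xh}" for x
      using \<psi> that unfolding regret_function_def by blast
  qed (use assms(1,2) represents in simp_all)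
  show ?thesis
    using indifferent_if_same_distr[OF assms(6,7) distr_eq_if_cdf_of_eq[OF assms(6-8)]]
    unfolding indifferent_def .
qed

end
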